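(* Let $\kappa$ be a regular uncountable cardinal. There exist a pleasant ideal $J$ on $\kappa$ and a set $A\in J^+$ such that $J\restriction A$ is not pleasant.
   Context: An ideal on $\kappa$ is a family of subsets of $\kappa$ closed under subsets and finite unions, which is $<\kappa$-complete and contains all singletons. $J^+=\{X\subseteq\kappa: X\notin J\}$, and for $A\in J^+$, $J\restriction A=\{X\subseteq\kappa: X\cap A\in J\}$. For $A\subseteq\kappa$ and $X_\alpha\subseteq\kappa$, $\bigtriangledown_{\alpha\in A}X_\alpha=\{\xi<\kappa:\exists\alpha<\xi\,(\alpha\in A\wedge \xi\in X_\alpha)\}$. An ideal $J$ is pleasant if whenever $A\in J$ and $X_\alpha\in J$ for all $\alpha$, then $\bigtriangledown_{\alpha\in A}X_\alpha\in J$. *)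

theory Defs
  imports Main "HOL-Library.Countable_Set"
begin

unbundle cardinal_syntax

text \<open>The cardinal kappa is represented by a cardinal well-order r on the whole
  type 'a (card_order r), so subsets of kappa are sets of type 'a set and
  alpha < xi means (alpha, xi) in r with alpha different from xi.\<close>

definition is_ideal :: "'a rel \<Rightarrow> 'a set set \<Rightarrow> bool" where
  "is_ideal r J \<longleftrightarrow>
     (\<forall>X Y. X \<in> J \<and> Y \<subseteq> X \<longrightarrow> Y \<in> J) \<and>
     (\<forall>X Y. X \<in> J \<and> Y \<in> J \<longrightarrow> X \<union> Y \<in> J) \<and>
     (\<forall>F. F \<subseteq> J \<and> |F| <o r \<longrightarrow> \<Union>F \<in> J) \<and>
     (\<forall>x. {x} \<in> J)"

definition positive_sets :: "'a set set \<Rightarrow> 'a set set" where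
  "positive_sets J = {X. X \<notin> J}"

definition restrict_ideal :: "'a set set \<Rightarrow> 'a set \<Rightarrow> 'a set set" where
  "restrict_ideal J A = {X. X \<inter> A \<in> J}"

definition diag_union :: "'a rel \<Rightarrow> 'a set \<Rightarrow> ('a \<Rightarrow> 'a set) \<Rightarrow> 'a set" where
  "diag_union r A X = {\<xi>. \<exists>\<alpha>. (\<alpha>, \<xi>) \<in> r \<and> \<alpha> \<noteq> \<xi> \<and> \<alpha> \<in> A \<and> \<xi> \<in> X \<alpha>}"

definition pleasant :: "'a rel \<Rightarrow> 'a set set \<Rightarrow> bool" where
  "pleasant r J \<longleftrightarrow>
     (\<forall>A X. A \<in> J \<and> (\<forall>\<alpha>. X \<alpha> \<in> J) \<longrightarrow> diag_union r A X \<in> J)"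

end

theory Submission
  imports Defs
begin

text \<open>The ideal is the ideal of sets of size less than \<open>\<kappa>\<close>, which is pleasant because
  a diagonal union is contained in the ordinary union of fewer than \<open>\<kappa>\<close> small sets.
  Split \<open>\<kappa>\<close> into disjoint sets \<open>A\<close> and \<open>B\<close> of size \<open>\<kappa>\<close>, and choose \<open>f \<alpha> \<in> A\<close> above \<open>\<alpha>\<close>
  for every \<open>\<alpha>\<close>. Relative to \<open>A\<close>, the set \<open>B\<close> and all singletons \<open>{f \<alpha>}\<close> are null,
  but the diagonal union of the singletons over \<open>B\<close> contains \<open>f ` B\<close>, a subset of \<open>A\<close>
  which is unbounded in \<open>\<kappa>\<close> (as \<open>B\<close> is) and hence, by regularity, of size \<open>\<kappa>\<close>.\<close>

definition small_sets :: "'a rel \<Rightarrow> 'a set set" where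
  "small_sets r = {X. |X| <o r}"

lemma card_order_Field: "card_order r \<Longrightarrow> Field r = UNIV"
  using card_order_on_well_order_on well_order_on_Field by blast

lemma card_order_linear_order: "card_order r \<Longrightarrow> linear_order r"
  using card_order_on_well_order_on well_order_on_def by blast

lemma card_order_total: "card_order r \<Longrightarrow> (x, y) \<in> r \<or> (y, x) \<in> r"
  using card_order_linear_order[of r]
  unfolding linear_order_on_def partial_order_on_def preorder_on_def refl_on_def total_on_def
  by (cases "x = y") auto

lemma card_order_trans: "card_order r \<Longrightarrow> (x, y) \<in> r \<Longrightarrow> (y, z) \<in> r \<Longrightarrow> (x, z) \<in> r"
  using card_order_linear_order[of r]
  unfolding linear_order_on_def partial_order_on_def preorder_on_def trans_def by blast

lemma small_sets_iff_ordLess_UNIV: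
  "card_order r \<Longrightarrow> X \<in> small_sets r \<longleftrightarrow> |X| <o |UNIV :: 'a set|"
  for r :: "'a rel"
  unfolding small_sets_def
  using card_of_unique ordIso_symmetric ordLess_ordIso_trans by blast

lemma finite_in_small_sets:
  fixes r :: "'a rel"
  assumes "card_order r" and "infinite (UNIV :: 'a set)" and "finite X"
  shows "X \<in> small_sets r"
proof -
  have "Well_order r"
    using card_order_on_well_order_on[OF assms(1)] card_order_Field[OF assms(1)] by simp
  then show ?thesis
    unfolding small_sets_def
    using finite_ordLess_infinite[OF card_of_Well_order \<open>Well_order r\<close>] assms(2,3)
      card_order_Field[OF assms(1)] by (simp add: Field_card_of)
qed

lemma small_sets_subset: "X \<in> small_sets r \<Longrightarrow> Y \<subseteq> X \<Longrightarrow> Y \<in> small_sets r"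
  unfolding small_sets_def using card_of_mono1 ordLeq_ordLess_trans by blast

lemma small_sets_UN:
  fixes r :: "'a rel"
  assumes "card_order r" and "regularCard r" and "infinite (UNIV :: 'a set)"
    and "|I| <o r" and "\<forall>i\<in>I. Z i \<in> small_sets r"
  shows "(\<Union>i\<in>I. Z i) \<in> small_sets r"
proof -
  have "Cinfinite r"
    using assms(3) card_order_on_Card_order[OF assms(1)] unfolding cinfinite_def by auto
  then show ?thesis
    using card_of_UNION_ordLess_infinite_Field_regularCard assms(2,4,5)
    unfolding small_sets_def by blast
qed

lemma small_sets_Un:
  fixes r :: "'a rel"
  assumes "card_order r" and "infinite (UNIV :: 'a set)"
    and "X \<in> small_sets r" and "Y \<in> small_sets r"
  shows "X \<union> Y \<in> small_sets r"
  using assms card_of_Un_ordLess_infinite_Field card_order_on_Card_order card_order_Field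
  unfolding small_sets_def by (metis mem_Collect_eq)

lemma is_ideal_small_sets:
  fixes r :: "'a rel"
  assumes "card_order r" and "regularCard r" and "infinite (UNIV :: 'a set)"
  shows "is_ideal r (small_sets r)"
  unfolding is_ideal_def
proof (intro conjI allI impI)
  fix F assume "F \<subseteq> small_sets r \<and> |F| <o r"
  then show "\<Union>F \<in> small_sets r"
    using small_sets_UN[OF assms, of F id] by auto
qed (use small_sets_subset small_sets_Un[OF assms(1,3)] finite_in_small_sets[OF assms(1,3)] in auto)

lemma pleasant_small_sets:
  fixes r :: "'a rel"
  assumes "card_order r" and "regularCard r" and "infinite (UNIV :: 'a set)"
  shows "pleasant r (small_sets r)"
  unfolding pleasant_def
proof (intro allI impI)
  fix A and X :: "'a \<Rightarrow> 'a set"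
  assume "A \<in> small_sets r \<and> (\<forall>\<alpha>. X \<alpha> \<in> small_sets r)"
  then have "(\<Union>\<alpha>\<in>A. X \<alpha>) \<in> small_sets r"
    using small_sets_UN[OF assms] unfolding small_sets_def by blast
  moreover have "diag_union r A X \<subseteq> (\<Union>\<alpha>\<in>A. X \<alpha>)"
    unfolding diag_union_def by blast
  ultimately show "diag_union r A X \<in> small_sets r"
    using small_sets_subset by blast
qed

lemma small_sets_iff_bounded:
  fixes r :: "'a rel"
  assumes "card_order r" and "regularCard r" and "infinite (UNIV :: 'a set)"
  shows "X \<in> small_sets r \<longleftrightarrow> (\<exists>a. X \<subseteq> under r a)"
proof
  assume "X \<in> small_sets r"
  then have "\<not> cofinal X r"
    using assms(2) card_order_Field[OF assms(1)] not_ordLess_ordIso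
    unfolding regularCard_def small_sets_def by blast
  then obtain a where "\<forall>x\<in>X. a = x \<or> (a, x) \<notin> r"
    unfolding cofinal_def by blast
  then have "X \<subseteq> under r a"
    using card_order_total[OF assms(1), of _ a] unfolding under_def by fastforce
  then show "\<exists>a. X \<subseteq> under r a" ..
next
  assume "\<exists>a. X \<subseteq> under r a"
  then obtain a where "X \<subseteq> under r a" ..
  then have "X \<subseteq> underS r a \<union> {a}"
    unfolding under_def underS_def by auto
  moreover have "underS r a \<in> small_sets r"
    unfolding small_sets_def
    using card_of_underS card_order_on_Card_order[OF assms(1)] card_order_Field[OF assms(1)]
    by (metis UNIV_I mem_Collect_eq)
  moreover have "{a} \<in> small_sets r"
    using finite_in_small_sets[OF assms(1,3)] by simp
  ultimately show "X \<in> small_sets r"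
    using small_sets_subset[OF small_sets_Un[OF assms(1,3)]] by blast
qed

lemma exists_above_in_not_small:
  fixes r :: "'a rel"
  assumes "card_order r" and "regularCard r" and "infinite (UNIV :: 'a set)"
    and "A \<notin> small_sets r"
  shows "\<exists>\<xi>\<in>A. \<alpha> \<noteq> \<xi> \<and> (\<alpha>, \<xi>) \<in> r"
proof (rule ccontr)
  assume "\<not> ?thesis"
  then have "A \<subseteq> under r \<alpha>"
    using card_order_total[OF assms(1), of \<alpha>] unfolding under_def by fastforce
  then show False
    using assms(4) small_sets_iff_bounded[OF assms(1-3)] by blast
qed

lemma image_not_small_if_above:
  fixes r :: "'a rel"
  assumes "card_order r" and "regularCard r" and "infinite (UNIV :: 'a set)"
    and "X \<notin> small_sets r" and "\<forall>x\<in>X. (x, f x) \<in> r"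
  shows "f ` X \<notin> small_sets r"
proof
  assume "f ` X \<in> small_sets r"
  then obtain a where "f ` X \<subseteq> under r a"
    using small_sets_iff_bounded[OF assms(1-3)] by blast
  then have "X \<subseteq> under r a"
    using assms(5) card_order_trans[OF assms(1)] unfolding under_def by blast
  then show False
    using assms(4) small_sets_iff_bounded[OF assms(1-3)] by blast
qed

lemma range_inj_not_small:
  fixes r :: "'a rel" and f :: "'a \<Rightarrow> 'a"
  assumes "card_order r" and "inj f"
  shows "range f \<notin> small_sets r"
proof -
  have "|range f| =o |UNIV :: 'a set|"
    using assms(2) card_of_ordIso inj_on_imp_bij_betw ordIso_symmetric by blast
  then show ?thesis
    using small_sets_iff_ordLess_UNIV[OF assms(1)] not_ordLess_ordIso by blast
qed

lemma obtain_disjoint_not_small_sets: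
  fixes r :: "'a rel"
  assumes "card_order r" and "infinite (UNIV :: 'a set)"
  obtains A B where "A \<inter> B = {}" and "A \<notin> small_sets r" and "B \<notin> small_sets r"
proof -
  have "|(UNIV :: 'a set) <+> (UNIV :: 'a set)| =o |UNIV :: 'a set|"
    by (rule card_of_Plus_infinite1[OF assms(2) ordLeq_refl[OF card_of_Card_order]])
  then obtain h :: "'a + 'a \<Rightarrow> 'a" where "bij_betw h (UNIV <+> UNIV) UNIV"
    using card_of_ordIso by blast
  then have "inj h"
    unfolding bij_betw_def by simp
  then have "range (h \<circ> Inl) \<inter> range (h \<circ> Inr) = {}" and "inj (h \<circ> Inl)" and "inj (h \<circ> Inr)"
    by (auto simp: inj_on_def)
  then show ?thesis
    using that range_inj_not_small[OF assms(1)] by blast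
qed

lemma not_pleasant_restrict_ideal:
  assumes "is_ideal r J" and "A \<inter> B = {}"
    and "\<forall>\<alpha>. f \<alpha> \<in> A \<and> \<alpha> \<noteq> f \<alpha> \<and> (\<alpha>, f \<alpha>) \<in> r" and "f ` B \<notin> J"
  shows "\<not> pleasant r (restrict_ideal J A)"
proof
  assume "pleasant r (restrict_ideal J A)"
  have subset_closed: "\<And>X Y. X \<in> J \<Longrightarrow> Y \<subseteq> X \<Longrightarrow> Y \<in> J"
    and singleton: "\<And>x. {x} \<in> J"
    using assms(1) unfolding is_ideal_def by simp_all
  have "B \<in> restrict_ideal J A"
    using subset_closed[OF singleton empty_subsetI] assms(2)
    unfolding restrict_ideal_def by (simp add: Int_commute)
  moreover have "\<forall>\<alpha>. {f \<alpha>} \<in> restrict_ideal J A"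
    using subset_closed[OF singleton Int_lower1] unfolding restrict_ideal_def by blast
  ultimately have "diag_union r B (\<lambda>\<alpha>. {f \<alpha>}) \<in> restrict_ideal J A"
    using \<open>pleasant r (restrict_ideal J A)\<close> unfolding pleasant_def by simp
  then have "diag_union r B (\<lambda>\<alpha>. {f \<alpha>}) \<inter> A \<in> J"
    unfolding restrict_ideal_def by simp
  moreover have "f ` B \<subseteq> diag_union r B (\<lambda>\<alpha>. {f \<alpha>}) \<inter> A"
    using assms(3) unfolding diag_union_def by blast
  ultimately show False
    using assms(4) subset_closed by blast
qed

theorem proposition2p5:
  fixes r :: "'a rel"
  assumes "card_order r"
    and "regularCard r"
    and "uncountable (UNIV :: 'a set)"
  shows "\<exists>J A. is_ideal r J \<and> pleasant r J \<and> A \<in> positive_sets J \<and>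
           \<not> pleasant r (restrict_ideal J A)"
proof -
  have inf: "infinite (UNIV :: 'a set)"
    using assms(3) countable_finite by blast
  obtain A B where AB: "A \<inter> B = {}" and "A \<notin> small_sets r" and "B \<notin> small_sets r"
    using obtain_disjoint_not_small_sets[OF assms(1) inf] by blast
  then obtain f where f: "\<forall>\<alpha>. f \<alpha> \<in> A \<and> \<alpha> \<noteq> f \<alpha> \<and> (\<alpha>, f \<alpha>) \<in> r"
    using exists_above_in_not_small[OF assms(1,2) inf] by metis
  have "f ` B \<notin> small_sets r"
    using image_not_small_if_above[OF assms(1,2) inf \<open>B \<notin> small_sets r\<close>] f by blast
  then have "\<not> pleasant r (restrict_ideal (small_sets r) A)"
    using not_pleasant_restrict_ideal[OF is_ideal_small_sets[OF assms(1,2) inf] AB f] by blast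
  then show ?thesis
    using is_ideal_small_sets[OF assms(1,2) inf] pleasant_small_sets[OF assms(1,2) inf]
      \<open>A \<notin> small_sets r\<close> unfolding positive_sets_def by blast
qed

end
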